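(* Let $H$ be a finite simple graph whose vertex set can be partitioned into anticliques (independent sets) of sizes $x_1,x_2,\ldots,x_k$. Then $$\rho(H) \geq \sum_{i=1}^k \frac{x_i(x_i + 1)}{2}.$$
   Context: All graphs are finite and simple. A coloring means a proper vertex coloring; an induced subgraph is rainbow if all its vertices have pairwise different colors. For a graph $H$, $\rho(H)$ is the least number $m$ such that there exists a graph $G$ on $m$ vertices such that every proper vertex coloring of $G$ contains a rainbow induced subgraph isomorphic to $H$. An anticlique is a set of pairwise non-adjacent vertices. *)

theory Defs
  imports Main "HOL-Library.Extended_Nat"
begin

definition simple_graph :: "'a set \<Rightarrow> ('a \<Rightarrow> 'a \<Rightarrow> bool) \<Rightarrow> bool" where
  "simple_graph V E \<longleftrightarrow> finite V \<and> (\<forall>u\<in>V. \<forall>v\<in>V. E u v \<longrightarrow> E v u) \<and> (\<forall>v\<in>V. \<not> E v v)"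

definition proper_coloring :: "'a set \<Rightarrow> ('a \<Rightarrow> 'a \<Rightarrow> bool) \<Rightarrow> ('a \<Rightarrow> nat) \<Rightarrow> bool" where
  "proper_coloring V E c \<longleftrightarrow> (\<forall>u\<in>V. \<forall>v\<in>V. E u v \<longrightarrow> c u \<noteq> c v)"

definition anticlique :: "('a \<Rightarrow> 'a \<Rightarrow> bool) \<Rightarrow> 'a set \<Rightarrow> bool" where
  "anticlique E A \<longleftrightarrow> (\<forall>u\<in>A. \<forall>v\<in>A. \<not> E u v)"

definition rainbow_induced_copy ::
  "'b set \<Rightarrow> ('b \<Rightarrow> 'b \<Rightarrow> bool) \<Rightarrow> 'a set \<Rightarrow> ('a \<Rightarrow> 'a \<Rightarrow> bool) \<Rightarrow> ('a \<Rightarrow> nat) \<Rightarrow> bool" where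
  "rainbow_induced_copy VH EH VG EG c \<longleftrightarrow>
     (\<exists>f. f ` VH \<subseteq> VG \<and> inj_on f VH \<and>
          (\<forall>u\<in>VH. \<forall>v\<in>VH. EH u v \<longleftrightarrow> EG (f u) (f v)) \<and>
          inj_on (c \<circ> f) VH)"

text \<open>Graphs G are taken on vertex sets of naturals (every finite
  graph is isomorphic to one). Value in enat; infinity if no such G exists.\<close>
definition rho :: "'b set \<Rightarrow> ('b \<Rightarrow> 'b \<Rightarrow> bool) \<Rightarrow> enat" where
  "rho VH EH = Inf {enat (card VG) | VG EG :: nat \<Rightarrow> nat \<Rightarrow> bool.
      simple_graph VG EG \<and>
      (\<forall>c. proper_coloring VG EG c \<longrightarrow> rainbow_induced_copy VH EH VG EG c)}"

end

theory Submission
  imports Defs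
begin

text \<open>Colour a graph G greedily: the \<open>j\<close>-th colour class is a maximum anticlique of what remains
  after removing the classes \<open>0, \<dots>, j-1\<close>. Then every anticlique using only colours \<open>\<ge> j\<close> has at
  most as many vertices as class \<open>j\<close>. In a rainbow copy of H, order the image of a part of size
  \<open>x\<close> by colour; its vertex of rank \<open>r\<close> from the top has a class of size \<open>\<ge> r\<close>, so the part uses
  classes of total size \<open>\<ge> 1 + \<dots> + x\<close>. The classes met by different vertices are distinct, so
  these bounds add up to at most \<open>|G|\<close>.\<close>

lemma triangular_le_sum_of_rank_bound:
  fixes c :: "'a \<Rightarrow> 'b::linorder" and h :: "'a \<Rightarrow> nat"
  assumes "finite S" "inj_on c S"
    and "\<And>v. v \<in> S \<Longrightarrow> card {w\<in>S. c v \<le> c w} \<le> h v"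
  shows "card S * (card S + 1) \<le> 2 * (\<Sum>v\<in>S. h v)"
  using assms
proof (induction "card S" arbitrary: S)
  case 0
  then show ?case by simp
next
  case (Suc n)
  obtain v0 where v0: "v0 \<in> S" "c v0 = Min (c ` S)"
    using Min_in[of "c ` S"] Suc.prems(1) Suc.hyps(2) by fastforce
  define S' where "S' = S - {v0}"
  have above_v0: "c v0 < c v" if "v \<in> S'" for v
  proof -
    have "c v0 \<le> c v"
      using v0(2) that Suc.prems(1) unfolding S'_def by simp
    moreover have "c v0 \<noteq> c v"
      using Suc.prems(2) v0(1) that unfolding S'_def inj_on_def by blast
    ultimately show ?thesis by simp
  qed
  have "card {w\<in>S'. c v \<le> c w} \<le> h v" if "v \<in> S'" for v
  proof -
    have "{w\<in>S'. c v \<le> c w} = {w\<in>S. c v \<le> c w}"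
      using above_v0[OF that] unfolding S'_def by auto
    then show ?thesis using Suc.prems(3) that unfolding S'_def by auto
  qed
  moreover have "card S' = n"
    using Suc.hyps(2) v0 Suc.prems(1) unfolding S'_def by auto
  ultimately have IH: "n * (n + 1) \<le> 2 * (\<Sum>v\<in>S'. h v)"
    using Suc.hyps(1)[of S'] Suc.prems(1,2) unfolding S'_def by (auto intro: inj_on_subset)
  have "{w\<in>S. c v0 \<le> c w} = S"
    using v0 Suc.prems(1) by auto
  then have "card S \<le> h v0"
    using Suc.prems(3)[OF v0(1)] by simp
  moreover have "(\<Sum>v\<in>S. h v) = h v0 + (\<Sum>v\<in>S'. h v)"
    unfolding S'_def using Suc.prems(1) v0 by (simp add: sum.remove)
  ultimately show ?case
    using IH Suc.hyps(2)[symmetric] by (simp add: algebra_simps)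
qed

definition max_anticlique :: "('a \<Rightarrow> 'a \<Rightarrow> bool) \<Rightarrow> 'a set \<Rightarrow> 'a set" where
  "max_anticlique E A = (SOME B. B \<subseteq> A \<and> anticlique E B \<and>
      (\<forall>B'. B' \<subseteq> A \<and> anticlique E B' \<longrightarrow> card B' \<le> card B))"

lemma max_anticlique_exists:
  assumes "finite A"
  shows "\<exists>B. B \<subseteq> A \<and> anticlique E B \<and> (\<forall>B'. B' \<subseteq> A \<and> anticlique E B' \<longrightarrow> card B' \<le> card B)"
proof -
  define F where "F = {B. B \<subseteq> A \<and> anticlique E B}"
  have "finite F"
    unfolding F_def using assms by simp
  moreover have "{} \<in> F"
    unfolding F_def anticlique_def by auto
  ultimately obtain B where "B \<in> F" "card B = Max (card ` F)"
    using Max_in[of "card ` F"] by fastforce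
  with \<open>finite F\<close> show ?thesis
    unfolding F_def by auto
qed

lemma
  assumes "finite A"
  shows max_anticlique_subset: "max_anticlique E A \<subseteq> A"
    and anticlique_max_anticlique: "anticlique E (max_anticlique E A)"
    and card_le_max_anticlique:
      "\<lbrakk>B \<subseteq> A; anticlique E B\<rbrakk> \<Longrightarrow> card B \<le> card (max_anticlique E A)"
  using someI_ex[OF max_anticlique_exists[OF assms, of E]] unfolding max_anticlique_def by blast+

locale finite_simple_graph =
  fixes V :: "'a set" and E :: "'a \<Rightarrow> 'a \<Rightarrow> bool"
  assumes simple_graph: "simple_graph V E"
begin

lemma finite_vertices: "finite V"
  using simple_graph unfolding simple_graph_def by simp

lemma anticlique_singleton: "v \<in> V \<Longrightarrow> anticlique E {v}"
  using simple_graph unfolding simple_graph_def anticlique_def by simp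

primrec greedy_rest :: "nat \<Rightarrow> 'a set" where
  "greedy_rest 0 = V"
| "greedy_rest (Suc j) = greedy_rest j - max_anticlique E (greedy_rest j)"

definition greedy_class :: "nat \<Rightarrow> 'a set" where
  "greedy_class j = max_anticlique E (greedy_rest j)"

definition greedy_colour :: "'a \<Rightarrow> nat" where
  "greedy_colour v = (LEAST j. v \<in> greedy_class j)"

lemma greedy_rest_subset: "greedy_rest j \<subseteq> V"
  by (induction j) auto

lemma greedy_rest_antimono: "j \<le> j' \<Longrightarrow> greedy_rest j' \<subseteq> greedy_rest j"
  by (induction j' rule: dec_induct) auto

lemma finite_greedy_rest: "finite (greedy_rest j)"
  using greedy_rest_subset finite_vertices by (rule finite_subset)

lemma greedy_class_subset_rest: "greedy_class j \<subseteq> greedy_rest j"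
  unfolding greedy_class_def by (rule max_anticlique_subset[OF finite_greedy_rest])

lemma greedy_class_subset: "greedy_class j \<subseteq> V"
  using greedy_class_subset_rest greedy_rest_subset by blast

lemma finite_greedy_class: "finite (greedy_class j)"
  using greedy_class_subset finite_vertices by (rule finite_subset)

lemma anticlique_greedy_class: "anticlique E (greedy_class j)"
  unfolding greedy_class_def by (rule anticlique_max_anticlique[OF finite_greedy_rest])

lemma card_le_greedy_class:
  "\<lbrakk>B \<subseteq> greedy_rest j; anticlique E B\<rbrakk> \<Longrightarrow> card B \<le> card (greedy_class j)"
  unfolding greedy_class_def by (rule card_le_max_anticlique[OF finite_greedy_rest])

lemma greedy_classes_disjoint:
  assumes "j \<noteq> j'"
  shows "greedy_class j \<inter> greedy_class j' = {}"
proof -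
  have "greedy_class j \<inter> greedy_class j' = {}" if "j < j'" for j j'
  proof -
    have "greedy_class j' \<subseteq> greedy_rest (Suc j)"
      using greedy_class_subset_rest[of j'] greedy_rest_antimono[of "Suc j" j'] that by simp
    then show ?thesis
      unfolding greedy_class_def by auto
  qed
  with assms show ?thesis
    by (metis Int_commute linorder_neqE_nat)
qed

lemma card_greedy_rest: "card (greedy_rest j) \<le> card V - j"
proof (induction j)
  case 0
  then show ?case by simp
next
  case (Suc j)
  show ?case
  proof (cases "greedy_rest j = {}")
    case True
    then show ?thesis by simp
  next
    case False
    then obtain v where v: "v \<in> greedy_rest j" by auto
    then have "1 \<le> card (greedy_class j)"
      using card_le_greedy_class[of "{v}" j] anticlique_singleton greedy_rest_subset by auto
    then have "greedy_class j \<inter> greedy_rest j \<noteq> {}"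
      using greedy_class_subset_rest[of j] by (auto simp: Int_absorb2)
    then have "card (greedy_rest (Suc j)) < card (greedy_rest j)"
      unfolding greedy_rest.simps greedy_class_def[symmetric]
      by (intro psubset_card_mono finite_greedy_rest) blast
    with Suc.IH show ?thesis by simp
  qed
qed

lemma greedy_classes_cover:
  assumes "v \<in> V"
  shows "\<exists>j. v \<in> greedy_class j"
proof -
  have "greedy_rest (card V) = {}"
    using card_greedy_rest[of "card V"] finite_greedy_rest by simp
  then have ex: "\<exists>j. v \<notin> greedy_rest j" by auto
  define j where "j = (LEAST j. v \<notin> greedy_rest j)"
  have "v \<notin> greedy_rest j"
    unfolding j_def using LeastI_ex[OF ex] .
  moreover obtain i where i: "j = Suc i"
    using \<open>v \<notin> greedy_rest j\<close> assms by (cases j) auto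
  moreover have "v \<in> greedy_rest i"
    using not_less_Least[of i "\<lambda>j. v \<notin> greedy_rest j"] i unfolding j_def by auto
  ultimately show ?thesis
    unfolding greedy_class_def by auto
qed

lemma in_greedy_class_colour: "v \<in> V \<Longrightarrow> v \<in> greedy_class (greedy_colour v)"
  unfolding greedy_colour_def by (rule LeastI_ex[OF greedy_classes_cover])

lemma proper_coloring_greedy_colour: "proper_coloring V E greedy_colour"
  unfolding proper_coloring_def
proof (intro ballI impI notI)
  fix u v
  assume "u \<in> V" "v \<in> V" "E u v" "greedy_colour u = greedy_colour v"
  then have "u \<in> greedy_class (greedy_colour u)" "v \<in> greedy_class (greedy_colour u)"
    using in_greedy_class_colour[OF \<open>u \<in> V\<close>] in_greedy_class_colour[OF \<open>v \<in> V\<close>] by simp_all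
  with \<open>E u v\<close> show False
    using anticlique_greedy_class unfolding anticlique_def by blast
qed

lemma card_anticlique_above_colour:
  assumes "T \<subseteq> V" "anticlique E T" "\<And>v. v \<in> T \<Longrightarrow> j \<le> greedy_colour v"
  shows "card T \<le> card (greedy_class j)"
proof (rule card_le_greedy_class[OF _ assms(2)])
  show "T \<subseteq> greedy_rest j"
  proof
    fix v
    assume "v \<in> T"
    then have "v \<in> greedy_rest (greedy_colour v)"
      using assms(1) in_greedy_class_colour greedy_class_subset_rest by blast
    with \<open>v \<in> T\<close> show "v \<in> greedy_rest j"
      using assms(3) greedy_rest_antimono by blast
  qed
qed

lemma triangular_le_sum_greedy_class:
  assumes "S \<subseteq> V" "anticlique E S" "inj_on greedy_colour S"
  shows "card S * (card S + 1) div 2 \<le> (\<Sum>v\<in>S. card (greedy_class (greedy_colour v)))"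
proof -
  have "card S * (card S + 1) \<le> 2 * (\<Sum>v\<in>S. card (greedy_class (greedy_colour v)))"
  proof (rule triangular_le_sum_of_rank_bound[OF _ assms(3)])
    show "finite S"
      using assms(1) finite_vertices by (rule finite_subset)
    show "card {w\<in>S. greedy_colour v \<le> greedy_colour w} \<le> card (greedy_class (greedy_colour v))"
      for v
      using assms(1,2) by (intro card_anticlique_above_colour) (auto simp: anticlique_def)
  qed
  then show ?thesis by simp
qed

lemma sum_greedy_class_le_card:
  assumes "R \<subseteq> V" "inj_on greedy_colour R"
  shows "(\<Sum>v\<in>R. card (greedy_class (greedy_colour v))) \<le> card V"
proof -
  have "finite R"
    using assms(1) finite_vertices by (rule finite_subset)
  have "(\<Sum>v\<in>R. card (greedy_class (greedy_colour v))) = (\<Sum>j\<in>greedy_colour ` R. card (greedy_class j))"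
    by (simp add: sum.reindex[OF assms(2)])
  also have "\<dots> = card (\<Union>j\<in>greedy_colour ` R. greedy_class j)"
    using \<open>finite R\<close> greedy_classes_disjoint finite_greedy_class
    by (intro card_UN_disjoint[symmetric]) auto
  also have "\<dots> \<le> card V"
    using finite_vertices greedy_class_subset by (intro card_mono) auto
  finally show ?thesis .
qed

end

lemma sum_triangular_le_card_of_rainbow_copy:
  fixes VG :: "'a set" and EG :: "'a \<Rightarrow> 'a \<Rightarrow> bool" and k :: nat
  assumes G: "simple_graph VG EG"
    and copy: "rainbow_induced_copy VH EH VG EG (finite_simple_graph.greedy_colour VG EG)"
    and "finite VH"
    and cover: "(\<Union>i<k. P i) = VH"
    and disjoint: "\<And>i j. i < k \<Longrightarrow> j < k \<Longrightarrow> i \<noteq> j \<Longrightarrow> P i \<inter> P j = {}"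
    and anti: "\<And>i. i < k \<Longrightarrow> anticlique EH (P i)"
  shows "(\<Sum>i<k. card (P i) * (card (P i) + 1) div 2) \<le> card VG"
proof -
  interpret G: finite_simple_graph VG EG
    using G by unfold_locales
  let ?w = "\<lambda>v. card (G.greedy_class (G.greedy_colour v))"
  obtain f where f: "f ` VH \<subseteq> VG" "inj_on f VH" "\<forall>u\<in>VH. \<forall>v\<in>VH. EH u v \<longleftrightarrow> EG (f u) (f v)"
    and "inj_on (G.greedy_colour \<circ> f) VH"
    using copy unfolding rainbow_induced_copy_def by blast
  then have rainbow: "inj_on G.greedy_colour (f ` VH)"
    by (simp add: inj_on_imageI)
  have part: "P i \<subseteq> VH" if "i < k" for i
    using cover that by auto
  have part_bound: "card (P i) * (card (P i) + 1) div 2 \<le> (\<Sum>v\<in>f ` P i. ?w v)" if "i < k" for i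
  proof -
    have "card (f ` P i) = card (P i)"
      using f(2) part[OF that] by (meson card_image inj_on_subset)
    moreover have "anticlique EG (f ` P i)"
      using anti[OF that] f(3) part[OF that] unfolding anticlique_def by blast
    moreover have "f ` P i \<subseteq> VG" "inj_on G.greedy_colour (f ` P i)"
      using f(1) image_mono[OF part[OF that], of f] inj_on_subset[OF rainbow] by blast+
    ultimately show ?thesis
      using G.triangular_le_sum_greedy_class[of "f ` P i"] by simp
  qed
  have "(\<Sum>i<k. card (P i) * (card (P i) + 1) div 2) \<le> (\<Sum>i<k. \<Sum>v\<in>f ` P i. ?w v)"
    using part_bound by (intro sum_mono) simp
  also have "\<dots> = (\<Sum>v\<in>(\<Union>i<k. f ` P i). ?w v)"
  proof (rule sum.UNION_disjoint[symmetric])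
    show "finite {..<k}"
      by simp
    show "\<forall>i\<in>{..<k}. finite (f ` P i)"
      using \<open>finite VH\<close> part by (meson finite_imageI finite_subset lessThan_iff)
    show "\<forall>i\<in>{..<k}. \<forall>j\<in>{..<k}. i \<noteq> j \<longrightarrow> f ` P i \<inter> f ` P j = {}"
    proof (intro ballI impI)
      fix i j
      assume "i \<in> {..<k}" "j \<in> {..<k}" "i \<noteq> j"
      then have "f ` P i \<inter> f ` P j = f ` (P i \<inter> P j)"
        using inj_on_image_Int[OF f(2)] part by simp
      with \<open>i \<in> {..<k}\<close> \<open>j \<in> {..<k}\<close> \<open>i \<noteq> j\<close> show "f ` P i \<inter> f ` P j = {}"
        using disjoint by simp
    qed
  qed
  also have "(\<Union>i<k. f ` P i) = f ` VH"
    using cover by blast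
  also have "(\<Sum>v\<in>f ` VH. ?w v) \<le> card VG"
    using G.sum_greedy_class_le_card f(1) rainbow .
  finally show ?thesis .
qed

theorem theorem2p1:
  fixes VH :: "'b set" and EH :: "'b \<Rightarrow> 'b \<Rightarrow> bool"
    and k :: nat and P :: "nat \<Rightarrow> 'b set" and x :: "nat \<Rightarrow> nat"
  assumes "simple_graph VH EH"
    and "(\<Union>i<k. P i) = VH"
    and "\<And>i j. i < k \<Longrightarrow> j < k \<Longrightarrow> i \<noteq> j \<Longrightarrow> P i \<inter> P j = {}"
    and "\<And>i. i < k \<Longrightarrow> anticlique EH (P i)"
    and "\<And>i. i < k \<Longrightarrow> card (P i) = x i"
  shows "rho VH EH \<ge> enat (\<Sum>i<k. x i * (x i + 1) div 2)"
  unfolding rho_def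
proof (rule Inf_greatest, clarify)
  fix VG :: "nat set" and EG
  assume G: "simple_graph VG EG"
    and every_coloring: "\<forall>c. proper_coloring VG EG c \<longrightarrow> rainbow_induced_copy VH EH VG EG c"
  interpret G: finite_simple_graph VG EG
    using G by unfold_locales
  have "finite VH"
    using assms(1) unfolding simple_graph_def by simp
  moreover have "rainbow_induced_copy VH EH VG EG G.greedy_colour"
    using every_coloring G.proper_coloring_greedy_colour by blast
  ultimately have "(\<Sum>i<k. card (P i) * (card (P i) + 1) div 2) \<le> card VG"
    using sum_triangular_le_card_of_rainbow_copy[OF G _ _ assms(2-4)] by blast
  then show "enat (\<Sum>i<k. x i * (x i + 1) div 2) \<le> enat (card VG)"
    using assms(5) by simp
qed

end
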